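(* Let $G$ be a profinite group satisfying the maximum condition on closed subgroups. (i) If $H$ is an orbital closed subgroup of $G$, then $\mathrm{i}_G(H)$ is an isolated orbital closed subgroup of $G$; moreover, if $H$ is normal in $G$ then so is $\mathrm{i}_G(H)$. (ii) If $G$ is orbitally sound and $H$ is a closed subgroup of finite index in $G$, then $H$ is orbitally sound.
   Context: A closed subgroup $H$ of a profinite group $G$ is $G$-orbital if $\mathbf{N}_G(H)$ is open in $G$. An orbital closed subgroup $H$ is isolated orbital if for every orbital closed subgroup $H'$ with $H\lneq H'\le G$ we have $[H':H]=\infty$. $G$ is orbitally sound if every isolated orbital closed subgroup of $G$ is normal. For an orbital closed subgroup $H$ of $G$, its isolator $\mathrm{i}_G(H)$ is the closed subgroup generated by all orbital closed subgroups $L$ of $G$ with $H\le L$ and $[L:H]<\infty$. *)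

theory Defs
  imports "HOL-Analysis.Analysis" "HOL-Algebra.Group_Action"
begin

definition topological_group :: "('a, 'b) monoid_scheme \<Rightarrow> 'a topology \<Rightarrow> bool" where
  "topological_group G T \<longleftrightarrow> group G \<and> topspace T = carrier G \<and>
     continuous_map (prod_topology T T) T (\<lambda>p. fst p \<otimes>\<^bsub>G\<^esub> snd p) \<and>
     continuous_map T T (\<lambda>x. inv\<^bsub>G\<^esub> x)"

definition profinite_group :: "('a, 'b) monoid_scheme \<Rightarrow> 'a topology \<Rightarrow> bool" where
  "profinite_group G T \<longleftrightarrow> topological_group G T \<and> compact_space T \<and> Hausdorff_space T \<and>
     (\<forall>x \<in> topspace T. connected_component_of_set T x = {x})"

definition closed_subgroup :: "('a, 'b) monoid_scheme \<Rightarrow> 'a topology \<Rightarrow> 'a set \<Rightarrow> bool" where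
  "closed_subgroup G T H \<longleftrightarrow> subgroup H G \<and> closedin T H"

definition max_cond_closed :: "('a, 'b) monoid_scheme \<Rightarrow> 'a topology \<Rightarrow> bool" where
  "max_cond_closed G T \<longleftrightarrow>
     (\<forall>S. S \<noteq> {} \<and> (\<forall>H \<in> S. closed_subgroup G T H) \<longrightarrow>
        (\<exists>M \<in> S. \<forall>H \<in> S. M \<subseteq> H \<longrightarrow> H = M))"

definition fin_index :: "('a, 'b) monoid_scheme \<Rightarrow> 'a set \<Rightarrow> 'a set \<Rightarrow> bool" where
  "fin_index G K H \<longleftrightarrow> finite {H #>\<^bsub>G\<^esub> x | x. x \<in> K}"

definition orbital :: "('a, 'b) monoid_scheme \<Rightarrow> 'a topology \<Rightarrow> 'a set \<Rightarrow> bool" where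
  "orbital G T H \<longleftrightarrow> closed_subgroup G T H \<and> openin T (normalizer G H)"

definition isolated_orbital :: "('a, 'b) monoid_scheme \<Rightarrow> 'a topology \<Rightarrow> 'a set \<Rightarrow> bool" where
  "isolated_orbital G T H \<longleftrightarrow> orbital G T H \<and>
     (\<forall>H'. orbital G T H' \<and> H \<subset> H' \<longrightarrow> \<not> fin_index G H' H)"

definition orbitally_sound :: "('a, 'b) monoid_scheme \<Rightarrow> 'a topology \<Rightarrow> bool" where
  "orbitally_sound G T \<longleftrightarrow> (\<forall>H. isolated_orbital G T H \<longrightarrow> H \<lhd> G)"

definition closed_generate :: "('a, 'b) monoid_scheme \<Rightarrow> 'a topology \<Rightarrow> 'a set \<Rightarrow> 'a set" where
  "closed_generate G T X = \<Inter> {K. closed_subgroup G T K \<and> X \<subseteq> K}"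

definition isolator :: "('a, 'b) monoid_scheme \<Rightarrow> 'a topology \<Rightarrow> 'a set \<Rightarrow> 'a set" where
  "isolator G T H = closed_generate G T
     (\<Union> {L. orbital G T L \<and> H \<subseteq> L \<and> fin_index G L H})"

end

theory Submission
  imports Defs "HOL-Algebra.Generated_Groups"
begin

text \<open>The key step is that the join \<open>P\<close> of two orbital overgroups \<open>L\<^sub>1, L\<^sub>2\<close> of finite index
  over an orbital subgroup \<open>H\<close> is again one. Since \<open>N\<^sub>G(H)\<close> is open, hence of finite index,
  \<open>H\<close> has only finitely many \<open>P\<close>-conjugates, each commensurable with \<open>H\<close>; so their
  intersection \<open>C\<close> has finite index in \<open>H\<close> and is normalized by \<open>P\<close>. Modulo \<open>C\<close>, \<open>P\<close> is
  generated by finitely many conjugacy classes of elements of finite order, so \<open>P/C\<close> is finite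
  by Dietzmann's lemma. Then \<open>P\<close> is closed, being a finite union of cosets of \<open>C\<close>, and
  \<open>N\<^sub>G(P) \<supseteq> N\<^sub>G(L\<^sub>1) \<inter> N\<^sub>G(L\<^sub>2)\<close> is open.

  By the maximum condition, \<open>H\<close> therefore has a greatest orbital overgroup of finite index,
  which is the isolator. It is isolated by transitivity of finite index, and normal if \<open>H\<close> is,
  because its conjugates are again such overgroups. For (ii), an isolated orbital subgroup \<open>K\<close>
  of the open subgroup \<open>H\<close> is orbital in \<open>G\<close>; its isolator \<open>M\<close> is normal in \<open>G\<close>, so \<open>M \<inter> H\<close>
  is orbital in \<open>H\<close> and contains \<open>K\<close> with finite index, whence \<open>K = M \<inter> H\<close> is normal in \<open>H\<close>.\<close>

section \<open>Indices\<close>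

lemma (in group) rcos_eq_iff:
  assumes "subgroup K G" "x \<in> carrier G" "y \<in> carrier G"
  shows "K #> x = K #> y \<longleftrightarrow> x \<otimes> inv y \<in> K"
proof
  assume "K #> x = K #> y"
  then have "x \<in> K #> y" using rcos_self[OF assms(2,1)] by simp
  then show "x \<otimes> inv y \<in> K" using subgroup.rcos_module_imp[OF assms(1) is_group assms(3)] by blast
next
  assume "x \<otimes> inv y \<in> K"
  then have "x \<in> K #> y" using subgroup.rcos_module_rev[OF assms(1) is_group assms(3,2)] by blast
  then show "K #> x = K #> y" using repr_independence[OF _ assms(3,1)] by simp
qed

lemma finite_image_if_rcos_invariant:
  assumes "finite {K #>\<^bsub>G\<^esub> x | x. x \<in> L}"
    and "\<And>x y. x \<in> L \<Longrightarrow> y \<in> L \<Longrightarrow> K #>\<^bsub>G\<^esub> x = K #>\<^bsub>G\<^esub> y \<Longrightarrow> f x = f y"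
  shows "finite {f x | x. x \<in> L}"
proof -
  let ?r = "\<lambda>Y. SOME x. x \<in> L \<and> K #>\<^bsub>G\<^esub> x = Y"
  have "f x = f (?r (K #>\<^bsub>G\<^esub> x))" if "x \<in> L" for x
  proof -
    have "\<exists>y. y \<in> L \<and> K #>\<^bsub>G\<^esub> y = K #>\<^bsub>G\<^esub> x" using that by blast
    then have "?r (K #>\<^bsub>G\<^esub> x) \<in> L \<and> K #>\<^bsub>G\<^esub> ?r (K #>\<^bsub>G\<^esub> x) = K #>\<^bsub>G\<^esub> x"
      by (rule someI_ex)
    then show ?thesis using assms(2) that by blast
  qed
  then have "{f x | x. x \<in> L} \<subseteq> (\<lambda>Y. f (?r Y)) ` {K #>\<^bsub>G\<^esub> x | x. x \<in> L}" by blast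
  then show ?thesis using assms(1) finite_surj by blast
qed

lemma (in group) fin_index_obtain_transversal:
  assumes "subgroup V G" "P \<subseteq> carrier G" "fin_index G P V"
  obtains R where "finite R" "R \<subseteq> P" "\<And>g. g \<in> P \<Longrightarrow> \<exists>t\<in>R. g \<otimes> inv t \<in> V"
proof -
  let ?r = "\<lambda>Y. SOME t. t \<in> P \<and> V #> t = Y"
  have r: "?r (V #> g) \<in> P \<and> V #> ?r (V #> g) = V #> g" if "g \<in> P" for g
  proof -
    have "\<exists>t. t \<in> P \<and> V #> t = V #> g" using that by blast
    then show ?thesis by (rule someI_ex)
  qed
  show ?thesis
  proof
    show "finite (?r ` {V #> x |x. x \<in> P})" using assms(3) unfolding fin_index_def by simp
    show "?r ` {V #> x |x. x \<in> P} \<subseteq> P" using r by auto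
    fix g assume g: "g \<in> P"
    have "g \<in> carrier G" "?r (V #> g) \<in> carrier G" using r[OF g] g assms(2) by auto
    moreover have "V #> g = V #> ?r (V #> g)" using r[OF g] by simp
    ultimately have "g \<otimes> inv ?r (V #> g) \<in> V" using rcos_eq_iff[OF assms(1)] by blast
    then show "\<exists>t\<in>?r ` {V #> x |x. x \<in> P}. g \<otimes> inv t \<in> V" using g by blast
  qed
qed

lemma (in group) fin_index_self:
  assumes "subgroup H G" shows "fin_index G H H"
proof -
  have "{H #> x |x. x \<in> H} \<subseteq> {H}" using subgroup.rcos_const[OF assms is_group] by blast
  then show ?thesis unfolding fin_index_def using finite_subset by blast
qed

lemma (in group) fin_index_larger_subgroup:
  assumes "subgroup K G" "subgroup K' G" "K \<subseteq> K'" "L \<subseteq> carrier G" "fin_index G L K"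
  shows "fin_index G L K'"
  unfolding fin_index_def
proof (rule finite_image_if_rcos_invariant[of G K L])
  show "finite {K #> x |x. x \<in> L}" using assms(5) by (simp add: fin_index_def)
  fix x y assume "x \<in> L" "y \<in> L" "K #> x = K #> y"
  then show "K' #> x = K' #> y" using rcos_eq_iff assms by (meson subsetD)
qed

lemma (in group) fin_index_Int:
  assumes "subgroup K G" "subgroup M G" "M \<subseteq> L" "fin_index G L K"
  shows "fin_index G M (M \<inter> K)"
  unfolding fin_index_def
proof (rule finite_image_if_rcos_invariant[of G K M])
  have "{K #> x |x. x \<in> M} \<subseteq> {K #> x |x. x \<in> L}" using assms(3) by blast
  then show "finite {K #> x |x. x \<in> M}" using assms(4) by (simp add: fin_index_def finite_subset)
  have MK: "subgroup (M \<inter> K) G" using assms(1,2) subgroups_Inter_pair by blast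
  fix x y assume xy: "x \<in> M" "y \<in> M" "K #> x = K #> y"
  have c: "x \<in> carrier G" "y \<in> carrier G" using xy assms(2) subgroup.subset by blast+
  have "x \<otimes> inv y \<in> K" using rcos_eq_iff[OF assms(1) c] xy by simp
  moreover have "x \<otimes> inv y \<in> M"
    using xy assms(2) by (simp add: subgroup.m_closed subgroup.m_inv_closed)
  ultimately show "(M \<inter> K) #> x = (M \<inter> K) #> y" using rcos_eq_iff[OF MK c] by simp
qed

lemma (in group) fin_index_trans:
  assumes "subgroup K G" "subgroup M G" "K \<subseteq> M" "L \<subseteq> carrier G"
    "fin_index G L M" "fin_index G M K"
  shows "fin_index G L K"
proof -
  obtain R where R: "finite R" "R \<subseteq> L" "\<And>x. x \<in> L \<Longrightarrow> \<exists>t\<in>R. x \<otimes> inv t \<in> M"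
    using fin_index_obtain_transversal[OF assms(2,4,5)] by blast
  have "{K #> x |x. x \<in> L} \<subseteq> (\<lambda>(Y, t). Y #> t) ` ({K #> m |m. m \<in> M} \<times> R)"
  proof
    fix Z assume "Z \<in> {K #> x |x. x \<in> L}"
    then obtain x where x: "x \<in> L" "Z = K #> x" by blast
    then obtain t where t: "t \<in> R" "x \<otimes> inv t \<in> M" using R(3) by blast
    have c: "x \<in> carrier G" "t \<in> carrier G" using x t R(2) assms(4) by auto
    have "K #> x = (K #> (x \<otimes> inv t)) #> t"
      using coset_mult_assoc[of K "x \<otimes> inv t" t] c subgroup.subset[OF assms(1)]
      by (simp add: m_assoc)
    then show "Z \<in> (\<lambda>(Y, t). Y #> t) ` ({K #> m |m. m \<in> M} \<times> R)"
      using x t by (auto intro!: image_eqI[where x="(K #> (x \<otimes> inv t), t)"])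
  qed
  then show ?thesis
    using R(1) assms(6) finite_subset unfolding fin_index_def by blast
qed

lemma (in group) fin_index_Int_Inter:
  assumes H: "subgroup H G" and F: "finite F" "\<forall>Y\<in>F. subgroup Y G \<and> fin_index G H (H \<inter> Y)"
  shows "fin_index G H (H \<inter> \<Inter>F)"
  using F
proof (induction F rule: finite_induct)
  case empty
  then show ?case using fin_index_self[OF H] by simp
next
  case (insert Y F)
  have HF: "subgroup (H \<inter> \<Inter>F) G"
    using insert H subgroups_Inter[of "insert H F"] by auto
  have HY: "subgroup (H \<inter> Y) G" using insert H subgroups_Inter_pair by blast
  have "fin_index G (H \<inter> \<Inter>F) ((H \<inter> \<Inter>F) \<inter> (H \<inter> Y))"
    using fin_index_Int[OF HY HF _] insert by blast
  then have "fin_index G H ((H \<inter> \<Inter>F) \<inter> (H \<inter> Y))"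
    using fin_index_trans[OF subgroups_Inter_pair[OF HF HY] HF] subgroup.subset[OF H] insert
    by blast
  moreover have "(H \<inter> \<Inter>F) \<inter> (H \<inter> Y) = H \<inter> \<Inter>(insert Y F)" by blast
  ultimately show ?case by simp
qed

section \<open>Conjugation and commensurability\<close>

text \<open>Right conjugation \<open>X\<^sup>g = g\<inverse> X g\<close>; the library's \<open>conjugation G g X\<close> is \<open>g X g\<inverse>\<close>.\<close>
definition conjugate :: "('a, 'b) monoid_scheme \<Rightarrow> 'a \<Rightarrow> 'a set \<Rightarrow> 'a set" where
  "conjugate G g X = (\<lambda>x. inv\<^bsub>G\<^esub> g \<otimes>\<^bsub>G\<^esub> x \<otimes>\<^bsub>G\<^esub> g) ` X"

context group
begin

lemma mult_inv_cancel_left [simp]: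
  "x \<in> carrier G \<Longrightarrow> y \<in> carrier G \<Longrightarrow> x \<otimes> (inv x \<otimes> y) = y"
  "x \<in> carrier G \<Longrightarrow> y \<in> carrier G \<Longrightarrow> inv x \<otimes> (x \<otimes> y) = y"
  by (simp_all add: m_assoc[symmetric])

lemma conjugate_mem_iff:
  assumes "X \<subseteq> carrier G" "g \<in> carrier G"
  shows "y \<in> conjugate G g X \<longleftrightarrow> y \<in> carrier G \<and> g \<otimes> y \<otimes> inv g \<in> X"
proof
  assume "y \<in> conjugate G g X"
  then obtain x where x: "x \<in> X" "y = inv g \<otimes> x \<otimes> g" unfolding conjugate_def by blast
  then have "g \<otimes> y \<otimes> inv g = x" using assms by (simp add: m_assoc subsetD)
  then show "y \<in> carrier G \<and> g \<otimes> y \<otimes> inv g \<in> X" using x assms by (simp add: subsetD)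
next
  assume a: "y \<in> carrier G \<and> g \<otimes> y \<otimes> inv g \<in> X"
  have "y = inv g \<otimes> (g \<otimes> y \<otimes> inv g) \<otimes> g" using a assms by (simp add: m_assoc)
  then show "y \<in> conjugate G g X" unfolding conjugate_def using a by blast
qed

lemma conjugate_subset_carrier: "X \<subseteq> carrier G \<Longrightarrow> g \<in> carrier G \<Longrightarrow> conjugate G g X \<subseteq> carrier G"
  unfolding conjugate_def by auto

lemma conjugate_one: "X \<subseteq> carrier G \<Longrightarrow> conjugate G \<one> X = X"
  unfolding conjugate_def by (force simp: image_iff)

lemma conjugate_mult:
  assumes "X \<subseteq> carrier G" "g \<in> carrier G" "h \<in> carrier G"
  shows "conjugate G (g \<otimes> h) X = conjugate G h (conjugate G g X)"
  unfolding conjugate_def image_image using assms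
  by (intro image_cong refl) (auto simp: inv_mult_group m_assoc subsetD)

lemma conjugate_Int:
  assumes "X \<subseteq> carrier G" "Y \<subseteq> carrier G" "g \<in> carrier G"
  shows "conjugate G g (X \<inter> Y) = conjugate G g X \<inter> conjugate G g Y"
  using assms conjugate_mem_iff[of "X \<inter> Y" g] conjugate_mem_iff[of X g] conjugate_mem_iff[of Y g]
  by blast

lemma conjugate_mono: "X \<subseteq> Y \<Longrightarrow> conjugate G g X \<subseteq> conjugate G g Y"
  unfolding conjugate_def by auto

lemma subgroup_conjugate:
  assumes "subgroup X G" "g \<in> carrier G"
  shows "subgroup (conjugate G g X) G"
proof -
  have X: "X \<subseteq> carrier G" using assms subgroup.subset by blast
  note mem = conjugate_mem_iff[OF X assms(2)]
  show ?thesis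
  proof (rule subgroupI)
    show "conjugate G g X \<subseteq> carrier G" using conjugate_subset_carrier X assms by blast
    show "conjugate G g X \<noteq> {}"
      using subgroup.one_closed[OF assms(1)] unfolding conjugate_def by blast
    fix a b assume ab: "a \<in> conjugate G g X" "b \<in> conjugate G g X"
    then have c: "a \<in> carrier G" "b \<in> carrier G" "g \<otimes> a \<otimes> inv g \<in> X" "g \<otimes> b \<otimes> inv g \<in> X"
      using mem by auto
    have "g \<otimes> inv a \<otimes> inv g = inv (g \<otimes> a \<otimes> inv g)"
      using c assms by (simp add: inv_mult_group m_assoc)
    then show "inv a \<in> conjugate G g X" using mem c subgroup.m_inv_closed[OF assms(1)] by simp
    have "g \<otimes> (a \<otimes> b) \<otimes> inv g = (g \<otimes> a \<otimes> inv g) \<otimes> (g \<otimes> b \<otimes> inv g)"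
      using c assms by (simp add: m_assoc)
    then show "a \<otimes> b \<in> conjugate G g X" using mem c subgroup.m_closed[OF assms(1)] by simp
  qed
qed

lemma conjugate_rcos:
  assumes "K \<subseteq> carrier G" "x \<in> carrier G" "g \<in> carrier G"
  shows "conjugate G g (K #> x) = (conjugate G g K) #> (inv g \<otimes> x \<otimes> g)"
proof -
  have "\<And>k. k \<in> K \<Longrightarrow> inv g \<otimes> (k \<otimes> x) \<otimes> g = inv g \<otimes> k \<otimes> g \<otimes> (inv g \<otimes> x \<otimes> g)"
    using assms by (simp add: m_assoc subsetD)
  then show ?thesis unfolding conjugate_def r_coset_def by (auto simp: image_iff)
qed

lemma conj_pow:
  assumes "g \<in> carrier G" "a \<in> carrier G"
  shows "(inv g \<otimes> a \<otimes> g) [^] (n::nat) = inv g \<otimes> a [^] n \<otimes> g"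
  by (induction n) (use assms in \<open>simp_all add: m_assoc\<close>)

lemma conjugate_eq_if_conjugates_subset:
  assumes X: "X \<subseteq> carrier G" and U: "subgroup U G"
    and sub: "\<And>v. v \<in> U \<Longrightarrow> conjugate G v X \<subseteq> X" and u: "u \<in> U"
  shows "conjugate G u X = X"
proof
  have uc: "u \<in> carrier G" using subgroup.mem_carrier[OF U u] .
  have "X = conjugate G u (conjugate G (inv u) X)"
    using conjugate_mult[OF X inv_closed[OF uc] uc] conjugate_one[OF X] uc by simp
  also have "\<dots> \<subseteq> conjugate G u X"
    using conjugate_mono sub[OF subgroup.m_inv_closed[OF U u]] by blast
  finally show "X \<subseteq> conjugate G u X" .
qed (rule sub[OF u])

lemma conjugate_inv_eq_iff:
  assumes "L \<subseteq> carrier G" "g \<in> carrier G"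
  shows "conjugate G (inv g) L = L \<longleftrightarrow> conjugate G g L = L"
proof -
  have "conjugate G g (conjugate G (inv g) L) = L" "conjugate G (inv g) (conjugate G g L) = L"
    using conjugate_mult[OF assms(1) inv_closed[OF assms(2)] assms(2)]
      conjugate_mult[OF assms(1) assms(2) inv_closed[OF assms(2)]]
      conjugate_one[OF assms(1)] assms(2)
    by simp_all
  then show ?thesis by metis
qed

lemma mem_normalizer_iff:
  assumes "L \<subseteq> carrier G"
  shows "g \<in> normalizer G L \<longleftrightarrow> g \<in> carrier G \<and> conjugate G g L = L"
proof -
  have "g \<in> normalizer G L \<longleftrightarrow> g \<in> carrier G \<and> g <# L #> inv g = L"
    unfolding normalizer_def stabilizer_def using assms by auto
  moreover have "g <# L #> inv g = conjugate G (inv g) L" if "g \<in> carrier G"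
    using that unfolding conjugate_def l_coset_def r_coset_def by auto
  ultimately show ?thesis using conjugate_inv_eq_iff[OF assms] by blast
qed

end

definition commensurable :: "('a, 'b) monoid_scheme \<Rightarrow> 'a set \<Rightarrow> 'a set \<Rightarrow> bool" where
  "commensurable G X Y \<longleftrightarrow> fin_index G X (X \<inter> Y) \<and> fin_index G Y (X \<inter> Y)"

context group
begin

lemma fin_index_Int_chain:
  assumes "subgroup X G" "subgroup Y G" "subgroup Z G"
    "fin_index G X (X \<inter> Y)" "fin_index G Y (Y \<inter> Z)"
  shows "fin_index G X (X \<inter> Z)"
proof -
  have s: "subgroup (X \<inter> Y) G" "subgroup (Y \<inter> Z) G" "subgroup (X \<inter> Z) G"
    "subgroup ((X \<inter> Y) \<inter> (Y \<inter> Z)) G"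
    using assms subgroups_Inter_pair by blast+
  have "fin_index G (X \<inter> Y) ((X \<inter> Y) \<inter> (Y \<inter> Z))"
    using fin_index_Int[OF s(2) s(1) _ assms(5)] by blast
  then have "fin_index G X ((X \<inter> Y) \<inter> (Y \<inter> Z))"
    using fin_index_trans[OF s(4) s(1) _ _ assms(4)] subgroup.subset[OF assms(1)] by blast
  then show ?thesis
    using fin_index_larger_subgroup[OF s(4) s(3)] subgroup.subset[OF assms(1)] by blast
qed

lemma commensurable_refl: "subgroup H G \<Longrightarrow> commensurable G H H"
  unfolding commensurable_def using fin_index_self by simp

lemma commensurable_trans:
  assumes "subgroup X G" "subgroup Y G" "subgroup Z G"
    "commensurable G X Y" "commensurable G Y Z"
  shows "commensurable G X Z"
  using assms fin_index_Int_chain[of X Y Z] fin_index_Int_chain[of Z Y X]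
  unfolding commensurable_def by (simp add: Int_commute)

lemma fin_index_conjugate:
  assumes "K \<subseteq> carrier G" "L \<subseteq> carrier G" "g \<in> carrier G" "fin_index G L K"
  shows "fin_index G (conjugate G g L) (conjugate G g K)"
proof -
  have "{conjugate G g K #> y |y. y \<in> conjugate G g L} \<subseteq> conjugate G g ` {K #> x |x. x \<in> L}"
  proof
    fix Z assume "Z \<in> {conjugate G g K #> y |y. y \<in> conjugate G g L}"
    then obtain x where x: "x \<in> L" "Z = conjugate G g K #> (inv g \<otimes> x \<otimes> g)"
      unfolding conjugate_def by blast
    then have "Z = conjugate G g (K #> x)" using conjugate_rcos assms by (simp add: subsetD)
    then show "Z \<in> conjugate G g ` {K #> x |x. x \<in> L}" using x by blast
  qed
  then show ?thesis using assms(4) unfolding fin_index_def using finite_subset by blast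
qed

lemma commensurable_conjugate:
  assumes "subgroup X G" "subgroup Y G" "g \<in> carrier G" "commensurable G X Y"
  shows "commensurable G (conjugate G g X) (conjugate G g Y)"
  using assms fin_index_conjugate[of "X \<inter> Y" X g] fin_index_conjugate[of "X \<inter> Y" Y g]
    conjugate_Int[of X Y g] subgroup.subset
  unfolding commensurable_def by (metis inf.coboundedI1)

lemma conjugate_subgroup_self:
  assumes "subgroup L G" "x \<in> L"
  shows "conjugate G x L = L"
proof -
  have Lc: "L \<subseteq> carrier G" and xc: "x \<in> carrier G" using assms subgroup.subset by blast+
  have "inv x \<in> L" using subgroup.m_inv_closed[OF assms] .
  then have "\<forall>y\<in>L. inv x \<otimes> y \<otimes> x \<in> L \<and> x \<otimes> y \<otimes> inv x \<in> L"
    using assms subgroup.m_closed[OF assms(1)] by simp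
  then show ?thesis using conjugate_mem_iff[OF Lc xc] Lc unfolding conjugate_def by blast
qed

lemma commensurable_conjugate_in_overgroup:
  assumes H: "subgroup H G" and L: "subgroup L G" "H \<subseteq> L" "fin_index G L H" and x: "x \<in> L"
  shows "commensurable G H (conjugate G x H)"
proof -
  have Lc: "L \<subseteq> carrier G" and xc: "x \<in> carrier G" using L x subgroup.subset by blast+
  have Hc: "H \<subseteq> carrier G" using H subgroup.subset by blast
  have "fin_index G (conjugate G x L) (conjugate G x H)"
    using fin_index_conjugate[OF Hc Lc xc L(3)] .
  then have f: "fin_index G L (conjugate G x H)" using conjugate_subgroup_self[OF L(1) x] by simp
  have cs: "subgroup (conjugate G x H) G" using subgroup_conjugate[OF H xc] .
  have cL: "conjugate G x H \<subseteq> L"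
    using conjugate_mono[OF L(2), of x] conjugate_subgroup_self[OF L(1) x] by simp
  have "fin_index G H (H \<inter> conjugate G x H)" using fin_index_Int[OF cs H L(2) f] .
  moreover have "fin_index G (conjugate G x H) (conjugate G x H \<inter> H)"
    using fin_index_Int[OF H cs cL L(3)] .
  ultimately show ?thesis unfolding commensurable_def by (simp add: Int_commute)
qed

text \<open>An element of the join of two finite-index overgroups of \<open>H\<close> is a product of elements
  of the two, and conjugating by each factor changes \<open>H\<close> only up to commensurability.\<close>
lemma commensurable_conjugate_in_join:
  assumes H: "subgroup H G"
    and L1: "subgroup L1 G" "H \<subseteq> L1" "fin_index G L1 H"
    and L2: "subgroup L2 G" "H \<subseteq> L2" "fin_index G L2 H"
    and p: "p \<in> generate G (L1 \<union> L2)"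
  shows "commensurable G H (conjugate G p H)"
  using p
proof (induction rule: generate.induct)
  case one
  then show ?case using conjugate_one[OF subgroup.subset[OF H]] commensurable_refl[OF H] by simp
next
  case (incl h)
  then show ?case
    using commensurable_conjugate_in_overgroup[OF H L1] commensurable_conjugate_in_overgroup[OF H L2]
    by blast
next
  case (inv h)
  then show ?case
    using commensurable_conjugate_in_overgroup[OF H L1] commensurable_conjugate_in_overgroup[OF H L2]
      subgroup.m_inv_closed[OF L1(1)] subgroup.m_inv_closed[OF L2(1)] by blast
next
  case (eng p q)
  have "L1 \<union> L2 \<subseteq> carrier G" using L1 L2 subgroup.subset by blast
  then have pc: "p \<in> carrier G" "q \<in> carrier G"
    using eng(1,2) generate_is_subgroup subgroup.subset by blast+
  have Hc: "H \<subseteq> carrier G" using H subgroup.subset by blast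
  have Hp: "subgroup (conjugate G p H) G" using subgroup_conjugate[OF H pc(1)] .
  have "commensurable G (conjugate G q H) (conjugate G q (conjugate G p H))"
    using commensurable_conjugate[OF H Hp pc(2) eng(3)] .
  then show ?case
    using commensurable_trans[OF H subgroup_conjugate[OF H pc(2)] subgroup_conjugate[OF Hp pc(2)]]
      eng(4) conjugate_mult[OF Hc pc] by simp
qed

lemma conjugate_generate_subset:
  assumes S: "S \<subseteq> carrier G" and g: "g \<in> carrier G"
    and cl: "\<forall>h\<in>S. inv g \<otimes> h \<otimes> g \<in> generate G S"
  shows "conjugate G g (generate G S) \<subseteq> generate G S"
proof -
  have "inv g \<otimes> x \<otimes> g \<in> generate G S" if "x \<in> generate G S" for x
    using that
  proof (induction rule: generate.induct)
    case one
    then show ?case using g generate.one by simp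
  next
    case (incl h)
    then show ?case using cl by blast
  next
    case (inv h)
    have "inv g \<otimes> inv h \<otimes> g = inv (inv g \<otimes> h \<otimes> g)"
      using inv S g by (simp add: inv_mult_group m_assoc subsetD)
    then show ?case using cl inv subgroup.m_inv_closed[OF generate_is_subgroup[OF S]] by simp
  next
    case (eng p q)
    have "p \<in> carrier G" "q \<in> carrier G"
      using eng(1,2) generate_is_subgroup[OF S] subgroup.subset by blast+
    then have "inv g \<otimes> (p \<otimes> q) \<otimes> g = (inv g \<otimes> p \<otimes> g) \<otimes> (inv g \<otimes> q \<otimes> g)"
      using g by (simp add: m_assoc)
    then show ?case using generate.eng[OF eng(3,4)] by simp
  qed
  then show ?thesis unfolding conjugate_def by blast
qed

lemma subset_normalizer_generate:
  assumes S: "S \<subseteq> carrier G" and U: "subgroup U G"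
    and cl: "\<And>u h. u \<in> U \<Longrightarrow> h \<in> S \<Longrightarrow> inv u \<otimes> h \<otimes> u \<in> S"
  shows "U \<subseteq> normalizer G (generate G S)"
proof
  fix u assume u: "u \<in> U"
  have Pc: "generate G S \<subseteq> carrier G" using subgroup.subset[OF generate_is_subgroup[OF S]] .
  have "conjugate G v (generate G S) \<subseteq> generate G S" if "v \<in> U" for v
    using conjugate_generate_subset[OF S] that cl subgroup.mem_carrier[OF U] generate.incl[of _ S G]
    by blast
  then show "u \<in> normalizer G (generate G S)"
    using conjugate_eq_if_conjugates_subset[OF Pc U _ u] mem_normalizer_iff[OF Pc]
      subgroup.mem_carrier[OF U u] by blast
qed

end

section \<open>Dietzmann's lemma\<close>

lemma count_list_pigeonhole:
  assumes "finite X" "set xs \<subseteq> X" "card X * m < length xs"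
  shows "\<exists>x\<in>X. m < count_list xs x"
proof (rule ccontr)
  assume "\<not> (\<exists>x\<in>X. m < count_list xs x)"
  then have "sum (count_list xs) X \<le> sum (\<lambda>_. m) X" by (intro sum_mono) (simp add: not_less)
  then show False using assms sum_count_set[OF assms(2,1)] by simp
qed

abbreviation (in monoid) lprod :: "'a list \<Rightarrow> 'a" where "lprod xs \<equiv> foldr (\<otimes>) xs \<one>"

lemma (in monoid) lprod_carrier: "set xs \<subseteq> carrier G \<Longrightarrow> lprod xs \<in> carrier G"
  by (induction xs) auto

lemma (in monoid) lprod_append:
  "set xs \<subseteq> carrier G \<Longrightarrow> set ys \<subseteq> carrier G \<Longrightarrow> lprod (xs @ ys) = lprod xs \<otimes> lprod ys"
  by (induction xs) (auto simp: m_assoc lprod_carrier)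

lemma (in monoid) lprod_replicate: "x \<in> carrier G \<Longrightarrow> lprod (replicate n x) = x [^] n"
proof (induction n)
  case (Suc n)
  then show ?case using nat_pow_Suc2[of x n] by simp
qed simp

context group
begin

lemma lprod_collect_front:
  assumes X: "X \<subseteq> carrier G" and cl: "\<And>y g. y \<in> X \<Longrightarrow> g \<in> carrier G \<Longrightarrow> inv g \<otimes> y \<otimes> g \<in> X"
    and x: "x \<in> X" and xs: "set xs \<subseteq> X"
  shows "\<exists>ys. set ys \<subseteq> X \<and> length ys = length xs - count_list xs x \<and>
     lprod xs = x [^] (count_list xs x) \<otimes> lprod ys"
  using xs
proof (induction xs)
  case Nil
  then show ?case by simp
next
  case (Cons y rest)
  let ?k = "count_list rest x"
  obtain ys where ys: "set ys \<subseteq> X" "length ys = length rest - ?k"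
    "lprod rest = x [^] ?k \<otimes> lprod ys" using Cons by auto
  have xc: "x \<in> carrier G" and yc: "y \<in> carrier G" using x Cons(2) X by auto
  have pc: "lprod ys \<in> carrier G" using ys X lprod_carrier by blast
  have le: "?k \<le> length rest" by (induction rest) auto
  show ?case
  proof (cases "y = x")
    case True
    have "lprod (y # rest) = x [^] Suc ?k \<otimes> lprod ys"
      using ys True xc pc nat_pow_Suc2[of x ?k] by (simp add: m_assoc)
    then show ?thesis using ys True by (intro exI[of _ ys]) simp
  next
    case False
    let ?z = "inv (x [^] ?k) \<otimes> y \<otimes> x [^] ?k"
    have z: "?z \<in> X" using cl Cons(2) xc by simp
    have "lprod (y # rest) = x [^] ?k \<otimes> (?z \<otimes> lprod ys)"
      using ys xc yc pc by (simp add: m_assoc)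
    then have "lprod (y # rest) = x [^] count_list (y # rest) x \<otimes> lprod (?z # ys)"
      using False by simp
    moreover have "length (?z # ys) = length (y # rest) - count_list (y # rest) x"
      using False ys le by simp
    ultimately show ?thesis using ys z by (intro exI[of _ "?z # ys"]) simp
  qed
qed

lemma lprod_shorten:
  assumes X: "X \<subseteq> carrier G" and cl: "\<And>y g. y \<in> X \<Longrightarrow> g \<in> carrier G \<Longrightarrow> inv g \<otimes> y \<otimes> g \<in> X"
    and x: "x \<in> X" "n > 0" "x [^] n = \<one>" and xs: "set xs \<subseteq> X" "n \<le> count_list xs x"
  shows "\<exists>zs. set zs \<subseteq> X \<and> length zs < length xs \<and> lprod zs = lprod xs"
proof -
  let ?k = "count_list xs x"
  obtain ys where ys: "set ys \<subseteq> X" "length ys = length xs - ?k" "lprod xs = x [^] ?k \<otimes> lprod ys"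
    using lprod_collect_front[OF X cl x(1) xs(1)] by blast
  have xc: "x \<in> carrier G" using x X by blast
  have "x [^] ?k = x [^] (?k - n) \<otimes> x [^] n"
    using xs(2) xc nat_pow_mult[of x "?k - n" n] by simp
  then have pow: "x [^] ?k = x [^] (?k - n)" using x(3) xc by simp
  define zs where "zs = replicate (?k - n) x @ ys"
  have "?k \<le> length xs" by (induction xs) auto
  then have "length zs < length xs" using ys(2) x(2) xs(2) unfolding zs_def by simp
  moreover have "lprod zs = lprod (replicate (?k - n) x) \<otimes> lprod ys"
    unfolding zs_def using ys(1) X xc by (intro lprod_append) auto
  then have "lprod zs = lprod xs"
    using lprod_replicate[OF xc] ys(3) pow by metis
  moreover have "set zs \<subseteq> X" using ys(1) x(1) unfolding zs_def by auto
  ultimately show ?thesis by blast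
qed

lemma lprod_shorten_bounded:
  assumes X: "finite X" "X \<subseteq> carrier G"
    and cl: "\<And>y g. y \<in> X \<Longrightarrow> g \<in> carrier G \<Longrightarrow> inv g \<otimes> y \<otimes> g \<in> X"
    and ord: "\<And>x. x \<in> X \<Longrightarrow> ord x > 0 \<and> x [^] (ord x :: nat) = \<one>"
    and xs: "set xs \<subseteq> X"
  shows "\<exists>ys. set ys \<subseteq> X \<and> length ys \<le> card X * Max (ord ` X) \<and> lprod ys = lprod xs"
  using xs
proof (induction "length xs" arbitrary: xs rule: less_induct)
  case less
  show ?case
  proof (cases "length xs \<le> card X * Max (ord ` X)")
    case True
    then show ?thesis using less(2) by (intro exI[of _ xs]) simp
  next
    case False
    obtain x where x: "x \<in> X" "Max (ord ` X) < count_list xs x"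
      using count_list_pigeonhole[OF X(1) less(2), of "Max (ord ` X)"] False by auto
    moreover have "ord x \<le> Max (ord ` X)" using X(1) x(1) by (intro Max_ge) auto
    ultimately have "x \<in> X" "ord x \<le> count_list xs x" by auto
    then obtain zs where zs: "set zs \<subseteq> X" "length zs < length xs" "lprod zs = lprod xs"
      using lprod_shorten[OF X(2) cl _ _ _ less(2)] ord by blast
    then show ?thesis using less(1)[OF zs(2,1)] by auto
  qed
qed

lemma dietzmann:
  assumes X: "finite X" "X \<subseteq> carrier G"
    and cl: "\<And>y g. y \<in> X \<Longrightarrow> g \<in> carrier G \<Longrightarrow> inv g \<otimes> y \<otimes> g \<in> X"
    and tor: "\<And>x. x \<in> X \<Longrightarrow> \<exists>n::nat. n > 0 \<and> x [^] n = \<one>"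
  shows "finite {lprod xs | xs. set xs \<subseteq> X}"
proof -
  have "\<forall>x\<in>X. \<exists>n::nat. n > 0 \<and> x [^] n = \<one>" using tor by blast
  from bchoice[OF this] obtain ord :: "'a \<Rightarrow> nat"
    where ord: "\<forall>x\<in>X. ord x > 0 \<and> x [^] ord x = \<one>" ..
  let ?B = "card X * Max (ord ` X)"
  have "{lprod xs | xs. set xs \<subseteq> X} \<subseteq> lprod ` {xs. set xs \<subseteq> X \<and> length xs \<le> ?B}"
  proof
    fix z assume "z \<in> {lprod xs | xs. set xs \<subseteq> X}"
    then obtain xs where xs: "set xs \<subseteq> X" "z = lprod xs" by blast
    then obtain ys where "set ys \<subseteq> X" "length ys \<le> ?B" "lprod ys = lprod xs"
      using lprod_shorten_bounded[OF X cl _ xs(1), of ord] ord by blast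
    then show "z \<in> lprod ` {xs. set xs \<subseteq> X \<and> length xs \<le> ?B}"
      using xs(2) by (intro image_eqI[of _ _ ys]) auto
  qed
  then show ?thesis using finite_lists_length_le[OF X(1)] finite_subset by blast
qed

end

section \<open>Topological groups\<close>

context group
begin

context
  fixes T :: "'a topology"
  assumes tg: "topological_group G T"
begin

lemma topspace_eq_carrier: "topspace T = carrier G"
  using tg unfolding topological_group_def by auto

lemma continuous_map_translation:
  assumes "a \<in> carrier G" "b \<in> carrier G"
  shows "continuous_map T T (\<lambda>x. a \<otimes> x \<otimes> b)"
proof -
  have mult: "continuous_map (prod_topology T T) T (\<lambda>p. fst p \<otimes> snd p)"
    using tg unfolding topological_group_def by auto
  have left: "continuous_map T (prod_topology T T) (\<lambda>x. (a, x))"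
    unfolding continuous_map_paired using assms topspace_eq_carrier by simp
  have "continuous_map T T (\<lambda>x. a \<otimes> x)"
    using continuous_map_compose[OF left mult] by (simp add: o_def)
  then have right: "continuous_map T (prod_topology T T) (\<lambda>x. (a \<otimes> x, b))"
    unfolding continuous_map_paired using assms topspace_eq_carrier by simp
  show ?thesis using continuous_map_compose[OF right mult] by (simp add: o_def)
qed

lemma rcos_eq_preimage:
  assumes "U \<subseteq> carrier G" "a \<in> carrier G"
  shows "U #> a = {x \<in> topspace T. \<one> \<otimes> x \<otimes> inv a \<in> U}"
proof -
  have "x \<in> U #> a \<longleftrightarrow> x \<in> carrier G \<and> x \<otimes> inv a \<in> U" for x
  proof
    assume "x \<in> U #> a"
    then obtain h where "h \<in> U" "x = h \<otimes> a" unfolding r_coset_def by blast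
    then show "x \<in> carrier G \<and> x \<otimes> inv a \<in> U" using assms by (auto simp: m_assoc subsetD)
  next
    assume x: "x \<in> carrier G \<and> x \<otimes> inv a \<in> U"
    then have "x = (x \<otimes> inv a) \<otimes> a" using assms by (simp add: m_assoc)
    then show "x \<in> U #> a" unfolding r_coset_def using x by blast
  qed
  then show ?thesis using topspace_eq_carrier by auto
qed

lemma openin_rcos:
  assumes U: "openin T U" and a: "a \<in> carrier G"
  shows "openin T (U #> a)"
proof -
  have "U \<subseteq> carrier G" using openin_subset[OF U] topspace_eq_carrier by simp
  then show ?thesis
    using openin_continuous_map_preimage[OF
        continuous_map_translation[OF one_closed inv_closed[OF a]] U]
      rcos_eq_preimage a by simp
qed

lemma closedin_rcos:
  assumes U: "closedin T U" and a: "a \<in> carrier G"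
  shows "closedin T (U #> a)"
proof -
  have "U \<subseteq> carrier G" using closedin_subset[OF U] topspace_eq_carrier by simp
  then show ?thesis
    using closedin_continuous_map_preimage[OF
        continuous_map_translation[OF one_closed inv_closed[OF a]] U]
      rcos_eq_preimage a by simp
qed

lemma conjugate_eq_preimage:
  "U \<subseteq> carrier G \<Longrightarrow> g \<in> carrier G \<Longrightarrow> conjugate G g U = {x \<in> topspace T. g \<otimes> x \<otimes> inv g \<in> U}"
  using conjugate_mem_iff topspace_eq_carrier by auto

lemma openin_conjugate:
  assumes U: "openin T U" and g: "g \<in> carrier G"
  shows "openin T (conjugate G g U)"
proof -
  have "U \<subseteq> carrier G" using openin_subset[OF U] topspace_eq_carrier by simp
  then show ?thesis
    using openin_continuous_map_preimage[OF continuous_map_translation[OF g inv_closed[OF g]] U]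
      conjugate_eq_preimage g by simp
qed

lemma closedin_conjugate:
  assumes U: "closedin T U" and g: "g \<in> carrier G"
  shows "closedin T (conjugate G g U)"
proof -
  have "U \<subseteq> carrier G" using closedin_subset[OF U] topspace_eq_carrier by simp
  then show ?thesis
    using closedin_continuous_map_preimage[OF continuous_map_translation[OF g inv_closed[OF g]] U]
      conjugate_eq_preimage g by simp
qed

lemma openin_subgroup_if_contains_open_subgroup:
  assumes K: "subgroup K G" and U: "subgroup U G" "openin T U" "U \<subseteq> K"
  shows "openin T K"
proof -
  have "K = \<Union>{U #> k | k. k \<in> K}"
  proof
    show "K \<subseteq> \<Union>{U #> k | k. k \<in> K}"
      using rcos_self[OF _ U(1)] subgroup.mem_carrier[OF K] by blast
    show "\<Union>{U #> k | k. k \<in> K} \<subseteq> K"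
      using U(3) subgroup.m_closed[OF K] unfolding r_coset_def by blast
  qed
  moreover have "openin T (\<Union>{U #> k | k. k \<in> K})"
    using openin_rcos[OF U(2)] subgroup.mem_carrier[OF K] by (intro openin_Union) blast
  ultimately show ?thesis by simp
qed

lemma fin_index_open_subgroup:
  assumes cpt: "compact_space T" and U: "subgroup U G" "openin T U"
  shows "fin_index G (carrier G) U"
proof -
  let ?C = "{U #> x | x. x \<in> carrier G}"
  have "\<forall>V\<in>?C. openin T V" using openin_rcos[OF U(2)] by blast
  moreover have "topspace T \<subseteq> \<Union>?C" using topspace_eq_carrier rcos_self[OF _ U(1)] by blast
  ultimately obtain F where F: "finite F" "F \<subseteq> ?C" "topspace T \<subseteq> \<Union>F"
    using cpt unfolding compact_space_alt by (metis (no_types, lifting))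
  have "?C \<subseteq> F"
  proof
    fix V assume "V \<in> ?C"
    then obtain x where x: "x \<in> carrier G" "V = U #> x" by blast
    then obtain W where W: "W \<in> F" "x \<in> W" using F(3) topspace_eq_carrier by blast
    then obtain y where y: "y \<in> carrier G" "W = U #> y" using F(2) by blast
    have "U #> y = U #> x" using repr_independence[OF _ y(1) U(1)] W y by simp
    then show "V \<in> F" using W x y by simp
  qed
  then show ?thesis unfolding fin_index_def using F(1) finite_subset by blast
qed

lemma closedin_subgroup_if_fin_index_over_closed:
  assumes P: "subgroup P G" and C: "subgroup C G" "closedin T C" "C \<subseteq> P" "fin_index G P C"
  shows "closedin T P"
proof -
  have "P = \<Union>{C #> x | x. x \<in> P}"
  proof
    show "P \<subseteq> \<Union>{C #> x | x. x \<in> P}"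
      using rcos_self[OF _ C(1)] subgroup.mem_carrier[OF P] by blast
    show "\<Union>{C #> x | x. x \<in> P} \<subseteq> P"
      using C(3) subgroup.m_closed[OF P] unfolding r_coset_def by blast
  qed
  moreover have "closedin T (\<Union>{C #> x | x. x \<in> P})"
    using C(4) closedin_rcos[OF C(2)] subgroup.mem_carrier[OF P]
    unfolding fin_index_def by (intro closedin_Union) auto
  ultimately show ?thesis by simp
qed

lemma openin_closed_subgroup_of_fin_index:
  assumes H: "subgroup H G" "closedin T H" and fi: "fin_index G (carrier G) H"
  shows "openin T H"
proof -
  have "carrier G - H = \<Union>{H #> x | x. x \<in> carrier G - H}"
  proof
    show "carrier G - H \<subseteq> \<Union>{H #> x | x. x \<in> carrier G - H}"
      using rcos_self[OF _ H(1)] by blast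
    show "\<Union>{H #> x | x. x \<in> carrier G - H} \<subseteq> carrier G - H"
    proof
      fix y assume "y \<in> \<Union>{H #> x | x. x \<in> carrier G - H}"
      then obtain x where x: "x \<in> carrier G" "x \<notin> H" "y \<in> H #> x" by blast
      have yc: "y \<in> carrier G" using subgroup.elemrcos_carrier[OF H(1) is_group x(1,3)] .
      have "y \<notin> H"
      proof
        assume "y \<in> H"
        then have "H #> x = H" using repr_independence[OF x(3,1) H(1)] coset_join2[OF yc H(1)] by simp
        then show False using coset_join1[OF _ x(1) H(1)] x(2) by blast
      qed
      then show "y \<in> carrier G - H" using yc by blast
    qed
  qed
  moreover have "closedin T (\<Union>{H #> x | x. x \<in> carrier G - H})"
  proof (rule closedin_Union)
    have "{H #> x | x. x \<in> carrier G - H} \<subseteq> {H #> x | x. x \<in> carrier G}" by blast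
    then show "finite {H #> x | x. x \<in> carrier G - H}"
      using fi unfolding fin_index_def by (rule finite_subset)
  qed (use closedin_rcos[OF H(2)] in blast)
  ultimately have "closedin T (carrier G - H)" by (simp only:)
  then show ?thesis
    unfolding openin_closedin_eq topspace_eq_carrier using subgroup.subset[OF H(1)] by simp
qed

end

end

section \<open>The join of two orbital overgroups of finite index\<close>

definition core :: "('a, 'b) monoid_scheme \<Rightarrow> 'a set \<Rightarrow> 'a set \<Rightarrow> 'a set" where
  "core G P H = \<Inter>{conjugate G p H | p. p \<in> P}"

context group
begin

lemma core_subset:
  assumes "subgroup P G" "H \<subseteq> carrier G"
  shows "core G P H \<subseteq> H"
proof -
  have "conjugate G \<one> H \<in> {conjugate G p H | p. p \<in> P}"
    using subgroup.one_closed[OF assms(1)] by blast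
  then show ?thesis unfolding core_def using conjugate_one[OF assms(2)] by blast
qed

lemma subgroup_core:
  assumes "subgroup H G" "subgroup P G"
  shows "subgroup (core G P H) G"
  unfolding core_def
proof (rule subgroups_Inter)
  show "{conjugate G p H |p. p \<in> P} \<noteq> {}" using subgroup.one_closed[OF assms(2)] by blast
  show "subgroup K G" if "K \<in> {conjugate G p H |p. p \<in> P}" for K
    using that subgroup_conjugate[OF assms(1)] subgroup.mem_carrier[OF assms(2)] by blast
qed

lemma conjugate_core:
  assumes P: "subgroup P G" and H: "H \<subseteq> carrier G" and g: "g \<in> P"
  shows "conjugate G g (core G P H) = core G P H"
proof (rule conjugate_eq_if_conjugates_subset[OF _ P _ g])
  show "core G P H \<subseteq> carrier G" using core_subset[OF P H] H by blast
  fix v assume v: "v \<in> P"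
  have vc: "v \<in> carrier G" using subgroup.mem_carrier[OF P v] .
  show "conjugate G v (core G P H) \<subseteq> core G P H"
  proof
    fix y assume "y \<in> conjugate G v (core G P H)"
    then obtain c where c: "c \<in> core G P H" "y = inv v \<otimes> c \<otimes> v" unfolding conjugate_def by blast
    have "y \<in> conjugate G p H" if p: "p \<in> P" for p
    proof -
      have pc: "p \<in> carrier G" using subgroup.mem_carrier[OF P p] .
      have "p \<otimes> inv v \<in> P" using subgroup.m_closed[OF P p subgroup.m_inv_closed[OF P v]] .
      then have "c \<in> conjugate G (p \<otimes> inv v) H" using c(1) unfolding core_def by blast
      then have "y \<in> conjugate G v (conjugate G (p \<otimes> inv v) H)"
        using c(2) unfolding conjugate_def by blast
      then show ?thesis using conjugate_mult[OF H m_closed[OF pc inv_closed[OF vc]] vc] pc vc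
        by (simp add: m_assoc)
    qed
    then show "y \<in> core G P H" unfolding core_def by blast
  qed
qed

lemma fin_index_core:
  assumes H: "subgroup H G" and P: "subgroup P G"
    and fin: "finite {conjugate G p H | p. p \<in> P}"
    and comm: "\<And>p. p \<in> P \<Longrightarrow> commensurable G H (conjugate G p H)"
  shows "fin_index G H (core G P H)"
proof -
  have "fin_index G H (H \<inter> core G P H)"
    unfolding core_def using fin comm subgroup_conjugate[OF H] subgroup.mem_carrier[OF P]
    by (intro fin_index_Int_Inter[OF H]) (auto simp: commensurable_def)
  then show ?thesis using core_subset[OF P subgroup.subset[OF H]] by (simp add: Int_absorb1)
qed

lemma finite_conjugates_if_fin_index_normalizer:
  assumes H: "H \<subseteq> carrier G" and P: "P \<subseteq> carrier G"
    and fi: "fin_index G (carrier G) (normalizer G H)"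
  shows "finite {conjugate G p H | p. p \<in> P}"
proof (rule finite_image_if_rcos_invariant[of G "normalizer G H" P])
  let ?N = "normalizer G H"
  have N: "subgroup ?N G" using normalizer_imp_subgroup[OF H] .
  have "{?N #> x | x. x \<in> P} \<subseteq> {?N #> x | x. x \<in> carrier G}" using P by blast
  then show "finite {?N #> x | x. x \<in> P}" using fi unfolding fin_index_def by (rule finite_subset)
  fix x y assume xy: "x \<in> P" "y \<in> P" "?N #> x = ?N #> y"
  have c: "x \<in> carrier G" "y \<in> carrier G" "x \<otimes> inv y \<in> carrier G" using xy P by auto
  have "x \<otimes> inv y \<in> ?N" using rcos_eq_iff[OF N c(1,2)] xy by simp
  then have N_xy: "conjugate G (x \<otimes> inv y) H = H" using mem_normalizer_iff[OF H] by blast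
  have "conjugate G x H = conjugate G ((x \<otimes> inv y) \<otimes> y) H" using c by (simp add: m_assoc)
  also have "\<dots> = conjugate G y (conjugate G (x \<otimes> inv y) H)" by (rule conjugate_mult[OF H c(3,2)])
  finally show "conjugate G x H = conjugate G y H" using N_xy by simp
qed

lemma pow_mem_if_fin_index:
  assumes C: "subgroup C G" and L: "subgroup L G" "fin_index G L C" and a: "a \<in> L"
  shows "\<exists>n::nat. n > 0 \<and> a [^] n \<in> C"
proof -
  have ac: "a \<in> carrier G" using subgroup.mem_carrier[OF L(1) a] .
  have "a [^] k \<in> L" for k :: nat
    using subgroup_int_pow_closed[OF L(1) a, of "int k"] by (simp add: int_pow_int)
  then have "range (\<lambda>k::nat. C #> a [^] k) \<subseteq> {C #> x | x. x \<in> L}" by blast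
  then have "finite (range (\<lambda>k::nat. C #> a [^] k))"
    using L(2) unfolding fin_index_def by (rule finite_subset)
  then have "\<not> inj (\<lambda>k::nat. C #> a [^] k)" using finite_imageD infinite_UNIV_nat by blast
  then obtain i j :: nat where "i \<noteq> j" "C #> a [^] i = C #> a [^] j" unfolding inj_def by blast
  then obtain i j :: nat where ij: "i < j" "C #> a [^] i = C #> a [^] j"
    by (metis linorder_neqE_nat)
  then have "a [^] j \<otimes> inv (a [^] i) \<in> C" using rcos_eq_iff[OF C, of "a [^] j" "a [^] i"] ac by simp
  moreover have "a [^] j = a [^] (j - i) \<otimes> a [^] i" using ij(1) ac by (simp add: nat_pow_mult)
  ultimately show ?thesis using ij(1) ac by (intro exI[of _ "j - i"]) (simp add: m_assoc)
qed

text \<open>Writing \<open>g = u t\<close> with \<open>u\<close> normalizing \<open>L\<close> and \<open>t\<close> in a finite transversal reduces all the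
  cosets to \<open>t\<close>-conjugates of the finitely many cosets of \<open>C\<close> in \<open>L\<close>.\<close>
lemma finite_rcos_conjugates:
  assumes P: "subgroup P G" and L: "subgroup L G" "fin_index G (carrier G) (normalizer G L)"
    and C: "C \<subseteq> L" "fin_index G L C" "\<And>p. p \<in> P \<Longrightarrow> conjugate G p C = C"
  shows "finite {C #> (inv g \<otimes> a \<otimes> g) | g a. g \<in> P \<and> a \<in> L}"
proof -
  have Lc: "L \<subseteq> carrier G" and Pc: "P \<subseteq> carrier G" using L P subgroup.subset by auto
  have Cc: "C \<subseteq> carrier G" using C(1) Lc by blast
  define V where "V = P \<inter> normalizer G L"
  have V: "subgroup V G" unfolding V_def
    using subgroups_Inter_pair[OF P normalizer_imp_subgroup[OF Lc]] .
  have "fin_index G P V"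
    unfolding V_def using fin_index_Int[OF normalizer_imp_subgroup[OF Lc] P Pc L(2)] .
  then obtain R where R: "finite R" "R \<subseteq> P" "\<And>g. g \<in> P \<Longrightarrow> \<exists>t\<in>R. g \<otimes> inv t \<in> V"
    using fin_index_obtain_transversal[OF V Pc] by blast
  have "{C #> (inv g \<otimes> a \<otimes> g) | g a. g \<in> P \<and> a \<in> L}
      \<subseteq> (\<lambda>(t, Y). conjugate G t Y) ` (R \<times> {C #> a | a. a \<in> L})"
  proof
    fix Z assume "Z \<in> {C #> (inv g \<otimes> a \<otimes> g) | g a. g \<in> P \<and> a \<in> L}"
    then obtain g a where ga: "g \<in> P" "a \<in> L" "Z = C #> (inv g \<otimes> a \<otimes> g)" by blast
    then obtain t where t: "t \<in> R" "g \<otimes> inv t \<in> V" using R(3) by blast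
    define u where "u = g \<otimes> inv t"
    have tP: "t \<in> P" using t(1) R(2) by blast
    have c: "g \<in> carrier G" "t \<in> carrier G" "a \<in> carrier G" "u \<in> carrier G"
      using ga tP Pc Lc unfolding u_def by auto
    have "conjugate G u L = L" using t(2) mem_normalizer_iff[OF Lc] unfolding u_def V_def by blast
    then have a': "inv u \<otimes> a \<otimes> u \<in> L" using ga(2) unfolding conjugate_def by blast
    then have a'c: "inv u \<otimes> a \<otimes> u \<in> carrier G" using Lc by blast
    have "inv g \<otimes> a \<otimes> g = inv t \<otimes> (inv u \<otimes> a \<otimes> u) \<otimes> t"
      using c unfolding u_def by (simp add: inv_mult_group m_assoc)
    then have "Z = conjugate G t (C #> (inv u \<otimes> a \<otimes> u))"
      using ga(3) conjugate_rcos[OF Cc a'c c(2)] C(3)[OF tP] by simp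
    then show "Z \<in> (\<lambda>(t, Y). conjugate G t Y) ` (R \<times> {C #> a | a. a \<in> L})"
      using t(1) a' by blast
  qed
  moreover have "finite ((\<lambda>(t, Y). conjugate G t Y) ` (R \<times> {C #> a | a. a \<in> L}))"
    using R(1) C(2) unfolding fin_index_def by simp
  ultimately show ?thesis by (rule finite_subset)
qed

end


context group
begin

lemma generate_eq_lprod:
  assumes S: "S \<subseteq> carrier G" "\<And>a. a \<in> S \<Longrightarrow> inv a \<in> S" and p: "p \<in> generate G S"
  shows "\<exists>xs. set xs \<subseteq> S \<and> p = lprod xs"
  using p
proof (induction rule: generate.induct)
  case one
  then show ?case by (intro exI[of _ "[]"]) simp
next
  case (incl h)
  then show ?case using S(1) by (intro exI[of _ "[h]"]) auto
next
  case (inv h)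
  then show ?case using S by (intro exI[of _ "[inv h]"]) auto
next
  case (eng p q)
  then obtain xs ys where "set xs \<subseteq> S" "p = lprod xs" "set ys \<subseteq> S" "q = lprod ys" by blast
  then show ?case using lprod_append[of xs ys] S(1) by (intro exI[of _ "xs @ ys"]) auto
qed

lemma lprod_mem_subgroup: "subgroup P G \<Longrightarrow> set xs \<subseteq> P \<Longrightarrow> lprod xs \<in> P"
  by (induction xs) (auto simp: subgroup.one_closed subgroup.m_closed)

lemma normal_if_conjugate_eq:
  assumes P: "subgroup P G" and C: "subgroup C G" "C \<subseteq> P" "\<And>p. p \<in> P \<Longrightarrow> conjugate G p C = C"
  shows "C \<lhd> G\<lparr>carrier := P\<rparr>"
proof -
  interpret GP: group "G\<lparr>carrier := P\<rparr>" using subgroup_imp_group[OF P] .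
  have "x \<otimes> h \<otimes> inv\<^bsub>G\<lparr>carrier := P\<rparr>\<^esub> x \<in> C" if x: "x \<in> P" and h: "h \<in> C" for x h
  proof -
    have xc: "x \<in> carrier G" using subgroup.mem_carrier[OF P x] .
    have "conjugate G (inv x) C = C" using C(3) subgroup.m_inv_closed[OF P x] .
    then have "inv (inv x) \<otimes> h \<otimes> inv x \<in> C" using h unfolding conjugate_def by blast
    then show ?thesis using m_inv_consistent[OF P x] xc by simp
  qed
  then show ?thesis using GP.normal_inv_iff subgroup_incl[OF C(1) P C(2)] by simp
qed

lemma FactGroup_of_subgroup:
  assumes P: "subgroup P G" and C: "C \<lhd> G\<lparr>carrier := P\<rparr>"
  defines "Q \<equiv> G\<lparr>carrier := P\<rparr> Mod C"
  shows "carrier Q = {C #> x | x. x \<in> P}"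
    and "x \<in> P \<Longrightarrow> y \<in> P \<Longrightarrow> (C #> x) \<otimes>\<^bsub>Q\<^esub> (C #> y) = C #> (x \<otimes> y)"
    and "x \<in> P \<Longrightarrow> inv\<^bsub>Q\<^esub> (C #> x) = C #> inv x"
    and "x \<in> P \<Longrightarrow> (C #> x) [^]\<^bsub>Q\<^esub> (n::nat) = C #> (x [^] n)"
    and "set xs \<subseteq> P \<Longrightarrow> foldr (\<otimes>\<^bsub>Q\<^esub>) (map ((#>) C) xs) \<one>\<^bsub>Q\<^esub> = C #> lprod xs"
proof -
  interpret N: normal C "G\<lparr>carrier := P\<rparr>" by (rule C)
  have Cc: "C \<subseteq> carrier G" using N.subset subgroup.subset[OF P] by auto
  show carrier: "carrier Q = {C #> x | x. x \<in> P}"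
    unfolding Q_def carrier_FactGroup by auto
  show mult: "(C #> x) \<otimes>\<^bsub>Q\<^esub> (C #> y) = C #> (x \<otimes> y)" if "x \<in> P" "y \<in> P" for x y
    using N.rcos_sum that unfolding Q_def by simp
  show "inv\<^bsub>Q\<^esub> (C #> x) = C #> inv x" if x: "x \<in> P"
  proof -
    interpret Q: group Q unfolding Q_def by (rule N.factorgroup_is_group)
    have ix: "inv x \<in> P" using subgroup.m_inv_closed[OF P x] .
    have "(C #> inv x) \<otimes>\<^bsub>Q\<^esub> (C #> x) = \<one>\<^bsub>Q\<^esub>"
      using mult[OF ix x] x subgroup.mem_carrier[OF P] coset_mult_one[OF Cc] unfolding Q_def by simp
    then show ?thesis using Q.inv_equality carrier x ix by blast
  qed
  show "(C #> x) [^]\<^bsub>Q\<^esub> n = C #> (x [^] n)" if x: "x \<in> P"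
  proof (induction n)
    case 0
    then show ?case using coset_mult_one[OF Cc] unfolding Q_def by simp
  next
    case (Suc n)
    have "x [^] n \<in> P" using subgroup_int_pow_closed[OF P x, of "int n"] by (simp add: int_pow_int)
    then show ?case using Suc mult[OF _ x] by simp
  qed
  show "foldr (\<otimes>\<^bsub>Q\<^esub>) (map ((#>) C) xs) \<one>\<^bsub>Q\<^esub> = C #> lprod xs" if "set xs \<subseteq> P"
    using that
  proof (induction xs)
    case Nil
    then show ?case using coset_mult_one[OF Cc] unfolding Q_def by simp
  next
    case (Cons a xs)
    then show ?case using mult lprod_mem_subgroup[OF P] by simp
  qed
qed

end

context group
begin

text \<open>Dietzmann's lemma applied in the quotient \<open>P / C\<close>.\<close>
lemma fin_index_if_generated_by_torsion_mod_normal: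
  assumes P: "subgroup P G" and C: "C \<lhd> G\<lparr>carrier := P\<rparr>"
    and Y: "Y \<subseteq> P" "\<And>y p. y \<in> Y \<Longrightarrow> p \<in> P \<Longrightarrow> inv p \<otimes> y \<otimes> p \<in> Y"
      "finite ((\<lambda>y. C #> y) ` Y)"
    and tor: "\<And>y. y \<in> Y \<Longrightarrow> \<exists>n::nat. n > 0 \<and> y [^] n \<in> C"
    and gen: "\<And>p. p \<in> P \<Longrightarrow> \<exists>ys. set ys \<subseteq> Y \<and> p = lprod ys"
  shows "fin_index G P C"
proof -
  define Q where "Q = G\<lparr>carrier := P\<rparr> Mod C"
  interpret N: normal C "G\<lparr>carrier := P\<rparr>" by (rule C)
  interpret Q: group Q unfolding Q_def by (rule N.factorgroup_is_group)
  note Q = FactGroup_of_subgroup[OF P C, folded Q_def]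
  have C_sub: "subgroup C G" using incl_subgroup[OF P N.subgroup_axioms] .
  let ?X = "(\<lambda>y. C #> y) ` Y"
  have XQ: "?X \<subseteq> carrier Q" using Q(1) Y(1) by blast
  have Xcl: "inv\<^bsub>Q\<^esub> h \<otimes>\<^bsub>Q\<^esub> x \<otimes>\<^bsub>Q\<^esub> h \<in> ?X" if x: "x \<in> ?X" and h: "h \<in> carrier Q" for x h
  proof -
    obtain y where y: "y \<in> Y" "x = C #> y" using x by blast
    obtain p where p: "p \<in> P" "h = C #> p" using h unfolding Q(1) by blast
    note yp = y p
    have yP: "y \<in> P" and ipP: "inv p \<in> P" using yp(1,3) Y(1) subgroup.m_inv_closed[OF P] by auto
    have "inv\<^bsub>Q\<^esub> h \<otimes>\<^bsub>Q\<^esub> x \<otimes>\<^bsub>Q\<^esub> h = (C #> (inv p \<otimes> y)) \<otimes>\<^bsub>Q\<^esub> (C #> p)"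
      using Q(2)[OF ipP yP] Q(3)[OF yp(3)] yp(2,4) by simp
    also have "\<dots> = C #> (inv p \<otimes> y \<otimes> p)"
      using Q(2)[OF subgroup.m_closed[OF P ipP yP] yp(3)] .
    finally have "inv\<^bsub>Q\<^esub> h \<otimes>\<^bsub>Q\<^esub> x \<otimes>\<^bsub>Q\<^esub> h = C #> (inv p \<otimes> y \<otimes> p)" .
    then show ?thesis using Y(2) yp by blast
  qed
  have Xtor: "\<exists>n::nat. n > 0 \<and> x [^]\<^bsub>Q\<^esub> n = \<one>\<^bsub>Q\<^esub>" if x: "x \<in> ?X" for x
  proof -
    obtain y where y: "y \<in> Y" "x = C #> y" using x by blast
    then obtain n :: nat where n: "n > 0" "y [^] n \<in> C" using tor by blast
    have "y \<in> P" using y(1) Y(1) by blast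
    then have "x [^]\<^bsub>Q\<^esub> n = C #> (y [^] n)" using Q(4) y(2) by simp
    also have "\<dots> = C" using subgroup.rcos_const[OF C_sub is_group n(2)] .
    finally have "x [^]\<^bsub>Q\<^esub> n = C" .
    then show ?thesis using n(1) unfolding Q_def by auto
  qed
  have "{C #> p | p. p \<in> P} \<subseteq> {Q.lprod xs | xs. set xs \<subseteq> ?X}"
  proof
    fix z assume "z \<in> {C #> p | p. p \<in> P}"
    then obtain ys where ys: "set ys \<subseteq> Y" "z = C #> lprod ys" using gen by blast
    then have "z = Q.lprod (map ((#>) C) ys)" using Q(5) Y(1) by auto
    moreover have "set (map ((#>) C) ys) \<subseteq> ?X" using ys(1) by auto
    ultimately show "z \<in> {Q.lprod xs | xs. set xs \<subseteq> ?X}" by blast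
  qed
  moreover have "finite {Q.lprod xs | xs. set xs \<subseteq> ?X}" using Q.dietzmann[OF Y(3) XQ Xcl Xtor] .
  ultimately show ?thesis unfolding fin_index_def by (rule finite_subset)
qed

lemma fin_index_generate_over_normal_torsion:
  assumes S: "S \<subseteq> carrier G" "\<And>a. a \<in> S \<Longrightarrow> inv a \<in> S"
    and C: "subgroup C G" "C \<subseteq> generate G S" "\<And>p. p \<in> generate G S \<Longrightarrow> conjugate G p C = C"
    and fin: "finite {C #> (inv g \<otimes> a \<otimes> g) | g a. g \<in> generate G S \<and> a \<in> S}"
    and tor: "\<And>a. a \<in> S \<Longrightarrow> \<exists>n::nat. n > 0 \<and> a [^] n \<in> C"
  shows "fin_index G (generate G S) C"
proof -
  let ?P = "generate G S"
  let ?Y = "{inv g \<otimes> a \<otimes> g | g a. g \<in> ?P \<and> a \<in> S}"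
  have P: "subgroup ?P G" using generate_is_subgroup[OF S(1)] .
  have SP: "S \<subseteq> ?P" using generate.incl[of _ S G] by blast
  have c: "g \<in> carrier G" "a \<in> carrier G" if "g \<in> ?P" "a \<in> S" for g a
    using that S(1) subgroup.mem_carrier[OF P] by auto
  have Y_sub: "?Y \<subseteq> ?P"
  proof
    fix y assume "y \<in> ?Y"
    then obtain g a where ga: "g \<in> ?P" "a \<in> S" "y = inv g \<otimes> a \<otimes> g" by blast
    then have "inv g \<in> ?P" "a \<in> ?P" using SP subgroup.m_inv_closed[OF P] by auto
    then show "y \<in> ?P" using ga(1,3) subgroup.m_closed[OF P] by simp
  qed
  have Y_conj: "inv p \<otimes> y \<otimes> p \<in> ?Y" if y: "y \<in> ?Y" and p: "p \<in> ?P" for y p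
  proof -
    obtain g a where ga: "g \<in> ?P" "a \<in> S" "y = inv g \<otimes> a \<otimes> g" using y by blast
    then have "inv p \<otimes> y \<otimes> p = inv (g \<otimes> p) \<otimes> a \<otimes> (g \<otimes> p)"
      using c[OF ga(1,2)] subgroup.mem_carrier[OF P p] by (simp add: inv_mult_group m_assoc)
    then show ?thesis using ga subgroup.m_closed[OF P ga(1) p] by blast
  qed
  have "(\<lambda>y. C #> y) ` ?Y = {C #> (inv g \<otimes> a \<otimes> g) | g a. g \<in> ?P \<and> a \<in> S}" by blast
  then have Y_fin: "finite ((\<lambda>y. C #> y) ` ?Y)" using fin by simp
  have Y_tor: "\<exists>n::nat. n > 0 \<and> y [^] n \<in> C" if y: "y \<in> ?Y" for y
  proof -
    obtain g a where ga: "g \<in> ?P" "a \<in> S" "y = inv g \<otimes> a \<otimes> g" using y by blast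
    obtain n :: nat where n: "n > 0" "a [^] n \<in> C" using tor[OF ga(2)] by blast
    have "inv g \<otimes> a [^] n \<otimes> g \<in> C" using C(3)[OF ga(1)] n(2) unfolding conjugate_def by blast
    then show ?thesis using n(1) ga(3) conj_pow[OF c[OF ga(1,2)]] by auto
  qed
  have Y_gen: "\<exists>ys. set ys \<subseteq> ?Y \<and> p = lprod ys" if p: "p \<in> ?P" for p
  proof -
    have "a \<in> ?Y" if "a \<in> S" for a
      using that S(1) subgroup.one_closed[OF P] by (intro CollectI exI[of _ "\<one>"] exI[of _ a]) auto
    then show ?thesis using generate_eq_lprod[OF S p] by blast
  qed
  show ?thesis
    by (rule fin_index_if_generated_by_torsion_mod_normal[OF P normal_if_conjugate_eq[OF P C]
          Y_sub Y_conj Y_fin Y_tor Y_gen])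
qed

text \<open>Modulo a normal subgroup \<open>C\<close> of finite index in \<open>L1\<close> and \<open>L2\<close>, the join is generated by
  the conjugates of the finitely many cosets of \<open>C\<close> in \<open>L1\<close> and \<open>L2\<close>, all of finite order.\<close>
lemma fin_index_join_over_normal:
  assumes L1: "subgroup L1 G" "fin_index G (carrier G) (normalizer G L1)"
      "C \<subseteq> L1" "fin_index G L1 C"
    and L2: "subgroup L2 G" "fin_index G (carrier G) (normalizer G L2)"
      "C \<subseteq> L2" "fin_index G L2 C"
    and C: "subgroup C G" "\<And>p. p \<in> generate G (L1 \<union> L2) \<Longrightarrow> conjugate G p C = C"
  shows "fin_index G (generate G (L1 \<union> L2)) C"
proof -
  let ?P = "generate G (L1 \<union> L2)"
  let ?X = "\<lambda>L. {C #> (inv g \<otimes> a \<otimes> g) |g a. g \<in> ?P \<and> a \<in> L}"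
  have Lc: "L1 \<union> L2 \<subseteq> carrier G" using L1(1) L2(1) subgroup.subset by blast
  have P: "subgroup ?P G" using generate_is_subgroup[OF Lc] .
  have "?X (L1 \<union> L2) = ?X L1 \<union> ?X L2" by blast
  moreover have "finite (?X L1)" using C(2) by (rule finite_rcos_conjugates[OF P L1])
  moreover have "finite (?X L2)" using C(2) by (rule finite_rcos_conjugates[OF P L2])
  ultimately have fin: "finite (?X (L1 \<union> L2))" by simp
  have inv: "inv a \<in> L1 \<union> L2" if "a \<in> L1 \<union> L2" for a
    using that subgroup.m_inv_closed[OF L1(1)] subgroup.m_inv_closed[OF L2(1)] by blast
  have sub: "C \<subseteq> ?P" using L1(3) generate.incl[of _ "L1 \<union> L2" G] by blast
  have tor: "\<exists>n::nat. n > 0 \<and> a [^] n \<in> C" if "a \<in> L1 \<union> L2" for a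
    using that pow_mem_if_fin_index[OF C(1) L1(1,4)] pow_mem_if_fin_index[OF C(1) L2(1,4)]
    by (cases "a \<in> L1") auto
  show ?thesis by (rule fin_index_generate_over_normal_torsion[OF Lc inv C(1) sub C(2) fin tor])
qed

end

lemma orbital_iff: "orbital G T H \<longleftrightarrow> subgroup H G \<and> closedin T H \<and> openin T (normalizer G H)"
  unfolding orbital_def closed_subgroup_def by simp

context group
begin

lemma conjugate_eq_if_normal:
  assumes M: "M \<lhd> G" and g: "g \<in> carrier G"
  shows "conjugate G g M = M"
proof (rule conjugate_eq_if_conjugates_subset[OF _ subgroup_self _ g])
  show "M \<subseteq> carrier G" using subgroup.subset[OF normal_imp_subgroup[OF M]] .
  show "conjugate G v M \<subseteq> M" if "v \<in> carrier G" for v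
    using that normal_inv_iff[of M] M inv_closed unfolding conjugate_def by fastforce
qed

lemma normalizer_normal: "N \<lhd> G \<Longrightarrow> normalizer G N = carrier G"
  using mem_normalizer_iff[OF subgroup.subset[OF normal_imp_subgroup]] conjugate_eq_if_normal
  by blast

lemma normal_if_conjugates_subset:
  assumes M: "subgroup M G" and sub: "\<And>g. g \<in> carrier G \<Longrightarrow> conjugate G g M \<subseteq> M"
  shows "M \<lhd> G"
proof -
  have "x \<otimes> h \<otimes> inv x \<in> M" if "x \<in> carrier G" "h \<in> M" for x h
  proof -
    have "inv (inv x) \<otimes> h \<otimes> inv x \<in> conjugate G (inv x) M"
      using that(2) unfolding conjugate_def by blast
    then show ?thesis using sub[OF inv_closed[OF that(1)]] that(1) by auto
  qed
  then show ?thesis using normal_inv_iff M by blast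
qed

lemma normalizer_conjugate:
  assumes M: "M \<subseteq> carrier G" and g: "g \<in> carrier G"
  shows "conjugate G g (normalizer G M) \<subseteq> normalizer G (conjugate G g M)"
proof
  fix y assume "y \<in> conjugate G g (normalizer G M)"
  then obtain n where n: "n \<in> normalizer G M" "y = inv g \<otimes> n \<otimes> g" unfolding conjugate_def by blast
  have nc: "n \<in> carrier G" "conjugate G n M = M" using n(1) mem_normalizer_iff[OF M] by auto
  have yc: "y \<in> carrier G" using n(2) nc g by simp
  have "g \<otimes> y = n \<otimes> g" using n(2) nc g by (simp add: m_assoc)
  then have "conjugate G y (conjugate G g M) = conjugate G g (conjugate G n M)"
    using conjugate_mult[OF M g yc] conjugate_mult[OF M nc(1) g] by simp
  then show "y \<in> normalizer G (conjugate G g M)"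
    using mem_normalizer_iff[OF conjugate_subset_carrier[OF M g]] nc(2) yc by simp
qed

lemma conjugate_carrier_update:
  assumes "subgroup H G" "g \<in> H"
  shows "conjugate (G\<lparr>carrier := H\<rparr>) g K = conjugate G g K"
  unfolding conjugate_def using m_inv_consistent[OF assms] by simp

lemma normalizer_carrier_update:
  assumes H: "subgroup H G" and K: "K \<subseteq> H"
  shows "normalizer (G\<lparr>carrier := H\<rparr>) K = H \<inter> normalizer G K"
proof -
  have Kc: "K \<subseteq> carrier G" using K subgroup.subset[OF H] by blast
  have "g \<in> normalizer (G\<lparr>carrier := H\<rparr>) K \<longleftrightarrow> g \<in> H \<and> conjugate G g K = K" for g
    using group.mem_normalizer_iff[OF subgroup_imp_group[OF H], of K g] K
      conjugate_carrier_update[OF H] by auto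
  then show ?thesis using mem_normalizer_iff[OF Kc] subgroup.subset[OF H] by blast
qed

context
  fixes T :: "'a topology"
  assumes tg: "topological_group G T"
begin

lemma closedin_core:
  assumes H: "closedin T H" and P: "subgroup P G"
  shows "closedin T (core G P H)"
  unfolding core_def
proof (rule closedin_Inter)
  show "{conjugate G p H |p. p \<in> P} \<noteq> {}" using subgroup.one_closed[OF P] by blast
  show "\<And>K. K \<in> {conjugate G p H |p. p \<in> P} \<Longrightarrow> closedin T K"
    using closedin_conjugate[OF tg H] subgroup.mem_carrier[OF P] by blast
qed

lemma fin_index_normalizer_orbital:
  "compact_space T \<Longrightarrow> orbital G T H \<Longrightarrow> fin_index G (carrier G) (normalizer G H)"
  using fin_index_open_subgroup[OF tg] normalizer_imp_subgroup subgroup.subset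
  unfolding orbital_iff by blast

lemma openin_normalizer_generate:
  assumes L1: "subgroup L1 G" "openin T (normalizer G L1)"
    and L2: "subgroup L2 G" "openin T (normalizer G L2)"
  shows "openin T (normalizer G (generate G (L1 \<union> L2)))"
proof -
  have Lc: "L1 \<subseteq> carrier G" "L2 \<subseteq> carrier G" using L1 L2 subgroup.subset by auto
  let ?U = "normalizer G L1 \<inter> normalizer G L2"
  have U: "subgroup ?U G"
    using subgroups_Inter_pair normalizer_imp_subgroup[OF Lc(1)] normalizer_imp_subgroup[OF Lc(2)]
    by blast
  have "?U \<subseteq> normalizer G (generate G (L1 \<union> L2))"
  proof (rule subset_normalizer_generate[OF _ U])
    show "L1 \<union> L2 \<subseteq> carrier G" using Lc by blast
    fix u h assume "u \<in> ?U" "h \<in> L1 \<union> L2"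
    then show "inv u \<otimes> h \<otimes> u \<in> L1 \<union> L2"
      using mem_normalizer_iff[OF Lc(1)] mem_normalizer_iff[OF Lc(2)] unfolding conjugate_def
      by blast
  qed
  moreover have "openin T ?U" using L1(2) L2(2) by blast
  moreover have "generate G (L1 \<union> L2) \<subseteq> carrier G"
    using subgroup.subset[OF generate_is_subgroup] Lc by blast
  ultimately show ?thesis
    using openin_subgroup_if_contains_open_subgroup[OF tg normalizer_imp_subgroup U] by blast
qed

lemma orbital_join:
  assumes cpt: "compact_space T" and H: "orbital G T H"
    and L1: "orbital G T L1" "H \<subseteq> L1" "fin_index G L1 H"
    and L2: "orbital G T L2" "H \<subseteq> L2" "fin_index G L2 H"
  shows "orbital G T (generate G (L1 \<union> L2)) \<and> fin_index G (generate G (L1 \<union> L2)) H"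
proof -
  define P where "P = generate G (L1 \<union> L2)"
  define C where "C = core G P H"
  have Hs: "subgroup H G" "closedin T H" and L1s: "subgroup L1 G" and L2s: "subgroup L2 G"
    using H L1 L2 unfolding orbital_iff by auto
  have Hc: "H \<subseteq> carrier G" and Lc: "L1 \<union> L2 \<subseteq> carrier G" using Hs L1s L2s subgroup.subset by auto
  have P: "subgroup P G" unfolding P_def using generate_is_subgroup[OF Lc] .
  have LP: "L1 \<subseteq> P" unfolding P_def using generate.incl[of _ "L1 \<union> L2" G] by blast
  have C: "subgroup C G" "closedin T C" "C \<subseteq> H" "\<And>p. p \<in> P \<Longrightarrow> conjugate G p C = C"
    unfolding C_def using subgroup_core[OF Hs(1) P] closedin_core[OF Hs(2) P]
      core_subset[OF P Hc] conjugate_core[OF P Hc] by auto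
  have "finite {conjugate G p H | p. p \<in> P}"
    using finite_conjugates_if_fin_index_normalizer[OF Hc subgroup.subset[OF P]]
      fin_index_normalizer_orbital[OF cpt H] .
  moreover have "commensurable G H (conjugate G p H)" if "p \<in> P" for p
    using commensurable_conjugate_in_join[OF Hs(1) L1s L1(2,3) L2s L2(2,3)] that unfolding P_def .
  ultimately have HC: "fin_index G H C" unfolding C_def by (rule fin_index_core[OF Hs(1) P])
  have "fin_index G L1 C" "fin_index G L2 C"
    using fin_index_trans[OF C(1) Hs(1) C(3) subgroup.subset[OF L1s] L1(3) HC]
      fin_index_trans[OF C(1) Hs(1) C(3) subgroup.subset[OF L2s] L2(3) HC] .
  then have PC: "fin_index G P C"
    using C(3,4) L1(2) L2(2) unfolding P_def
    by (intro fin_index_join_over_normal[OF L1s fin_index_normalizer_orbital[OF cpt L1(1)] _ _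
          L2s fin_index_normalizer_orbital[OF cpt L2(1)] _ _ C(1)]) auto
  have "fin_index G P H"
    using fin_index_larger_subgroup[OF C(1) Hs(1) C(3) subgroup.subset[OF P] PC] .
  moreover have "closedin T P"
    using closedin_subgroup_if_fin_index_over_closed[OF tg P C(1,2) _ PC] C(3) LP L1(2) by blast
  moreover have "openin T (normalizer G P)"
    unfolding P_def using openin_normalizer_generate L1(1) L2(1) unfolding orbital_iff by blast
  ultimately show ?thesis using P unfolding orbital_iff P_def by blast
qed


section \<open>Isolators\<close>

lemma orbital_conjugate:
  assumes M: "orbital G T M" and g: "g \<in> carrier G"
  shows "orbital G T (conjugate G g M)"
proof -
  have Ms: "subgroup M G" "closedin T M" "openin T (normalizer G M)"
    using M unfolding orbital_iff by auto
  have Mc: "M \<subseteq> carrier G" using subgroup.subset[OF Ms(1)] .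
  have "openin T (normalizer G (conjugate G g M))"
    using openin_subgroup_if_contains_open_subgroup[OF tg
        normalizer_imp_subgroup[OF conjugate_subset_carrier[OF Mc g]]
        subgroup_conjugate[OF normalizer_imp_subgroup[OF Mc] g]
        openin_conjugate[OF tg Ms(3) g] normalizer_conjugate[OF Mc g]] .
  then show ?thesis
    using subgroup_conjugate[OF Ms(1) g] closedin_conjugate[OF tg Ms(2) g]
      unfolding orbital_iff by blast
qed

lemma isolator_greatest:
  assumes cpt: "compact_space T" and mc: "max_cond_closed G T" and H: "orbital G T H"
  shows "orbital G T (isolator G T H)" "H \<subseteq> isolator G T H" "fin_index G (isolator G T H) H"
    and "\<And>L. orbital G T L \<Longrightarrow> H \<subseteq> L \<Longrightarrow> fin_index G L H \<Longrightarrow> L \<subseteq> isolator G T H"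
proof -
  define SS where "SS = {L. orbital G T L \<and> H \<subseteq> L \<and> fin_index G L H}"
  have "H \<in> SS" unfolding SS_def using H fin_index_self[of H] unfolding orbital_iff by blast
  moreover have "\<forall>L\<in>SS. closed_subgroup G T L" unfolding SS_def orbital_def by blast
  ultimately obtain M where M: "M \<in> SS" "\<And>L. L \<in> SS \<Longrightarrow> M \<subseteq> L \<Longrightarrow> L = M"
    using mc unfolding max_cond_closed_def by (metis empty_iff)
  have greatest: "L \<subseteq> M" if L: "L \<in> SS" for L
  proof -
    let ?J = "generate G (M \<union> L)"
    have "M \<subseteq> ?J" "L \<subseteq> ?J" using generate.incl[of _ "M \<union> L" G] by blast+
    moreover have "?J \<in> SS"
      using orbital_join[OF cpt H] M(1) L \<open>M \<subseteq> ?J\<close> unfolding SS_def by blast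
    ultimately show "L \<subseteq> M" using M(2) by blast
  qed
  have "isolator G T H = \<Inter>{K. closed_subgroup G T K \<and> \<Union>SS \<subseteq> K}"
    unfolding isolator_def closed_generate_def SS_def by simp
  also have "\<dots> = M"
  proof
    have "closed_subgroup G T M" using M(1) unfolding SS_def orbital_def by blast
    then show "\<Inter>{K. closed_subgroup G T K \<and> \<Union>SS \<subseteq> K} \<subseteq> M" using greatest by blast
    show "M \<subseteq> \<Inter>{K. closed_subgroup G T K \<and> \<Union>SS \<subseteq> K}" using M(1) by blast
  qed
  finally have iso: "isolator G T H = M" .
  then show "orbital G T (isolator G T H)" "H \<subseteq> isolator G T H" "fin_index G (isolator G T H) H"
    using M(1) unfolding SS_def by auto
  show "L \<subseteq> isolator G T H" if "orbital G T L" "H \<subseteq> L" "fin_index G L H" for L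
    using greatest that iso unfolding SS_def by blast
qed

lemma isolated_orbital_isolator:
  assumes cpt: "compact_space T" and mc: "max_cond_closed G T" and H: "orbital G T H"
  shows "isolated_orbital G T (isolator G T H)"
proof -
  note M = isolator_greatest[OF cpt mc H]
  have Hs: "subgroup H G" and Ms: "subgroup (isolator G T H) G"
    using H M(1) unfolding orbital_iff by auto
  have "\<not> fin_index G H' (isolator G T H)" if H': "orbital G T H'" "isolator G T H \<subset> H'" for H'
  proof
    assume "fin_index G H' (isolator G T H)"
    then have "fin_index G H' H"
      using fin_index_trans[OF Hs Ms M(2)] M(3) H'(1) subgroup.subset unfolding orbital_iff by blast
    then have "H' \<subseteq> isolator G T H" using M(2,4) H' by blast
    then show False using H'(2) by blast
  qed
  then show ?thesis unfolding isolated_orbital_def using M(1) by blast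
qed

lemma normal_isolator:
  assumes cpt: "compact_space T" and mc: "max_cond_closed G T" and H: "orbital G T H"
    and nH: "H \<lhd> G"
  shows "isolator G T H \<lhd> G"
proof -
  let ?M = "isolator G T H"
  note M = isolator_greatest[OF cpt mc H]
  have Hc: "H \<subseteq> carrier G" and Ms: "subgroup ?M G" using H M(1) subgroup.subset
    unfolding orbital_iff by auto
  have "conjugate G g ?M \<subseteq> ?M" if g: "g \<in> carrier G" for g
  proof (rule M(4))
    show "orbital G T (conjugate G g ?M)" by (rule orbital_conjugate[OF M(1) g])
    have H_eq: "conjugate G g H = H" using conjugate_eq_if_normal[OF nH g] .
    then show "H \<subseteq> conjugate G g ?M" using conjugate_mono[OF M(2), of g] by simp
    show "fin_index G (conjugate G g ?M) H"
      using fin_index_conjugate[OF Hc subgroup.subset[OF Ms] g M(3)] H_eq by simp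
  qed
  then show ?thesis using normal_if_conjugates_subset[OF Ms] by blast
qed

lemma orbital_if_orbital_in_open_subgroup:
  assumes H: "subgroup H G" "closedin T H" "openin T H"
    and K: "orbital (G\<lparr>carrier := H\<rparr>) (subtopology T H) K"
  shows "orbital G T K"
proof -
  have KH: "subgroup K (G\<lparr>carrier := H\<rparr>)" "closedin (subtopology T H) K"
    "openin (subtopology T H) (normalizer (G\<lparr>carrier := H\<rparr>) K)"
    using K unfolding orbital_iff by auto
  have Ks: "subgroup K G" and KsubH: "K \<subseteq> H"
    using incl_subgroup[OF H(1) KH(1)] subgroup.subset[OF KH(1)] by auto
  have Kc: "K \<subseteq> carrier G" using KsubH subgroup.subset[OF H(1)] by blast
  have "openin T (H \<inter> normalizer G K)"
    using openin_trans_full[OF KH(3) H(3)] normalizer_carrier_update[OF H(1) KsubH] by simp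
  then have "openin T (normalizer G K)"
    using openin_subgroup_if_contains_open_subgroup[OF tg normalizer_imp_subgroup[OF Kc]
        subgroups_Inter_pair[OF H(1) normalizer_imp_subgroup[OF Kc]]] by blast
  then show ?thesis using Ks closedin_trans_full[OF KH(2) H(2)] unfolding orbital_iff by blast
qed

lemma orbital_Int_normal:
  assumes M: "M \<lhd> G" "closedin T M" and H: "subgroup H G"
  shows "orbital (G\<lparr>carrier := H\<rparr>) (subtopology T H) (M \<inter> H)"
proof -
  interpret GH: group "G\<lparr>carrier := H\<rparr>" using subgroup_imp_group[OF H] .
  have MH: "M \<inter> H \<lhd> G\<lparr>carrier := H\<rparr>" using normal_Int_subgroup[OF H M(1)] .
  have "openin (subtopology T H) H"
    using openin_topspace[of "subtopology T H"] topspace_subtopology_subset[of H T]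
      subgroup.subset[OF H] topspace_eq_carrier[OF tg] by simp
  then show ?thesis
    using GH.normalizer_normal[OF MH] normal_imp_subgroup[OF MH] M(2)
    unfolding orbital_iff closedin_subtopology by auto
qed

lemma normal_if_isolated_orbital_in_fin_index_subgroup:
  assumes cpt: "compact_space T" and mc: "max_cond_closed G T" and os: "orbitally_sound G T"
    and H: "closed_subgroup G T H" "fin_index G (carrier G) H"
    and K: "isolated_orbital (G\<lparr>carrier := H\<rparr>) (subtopology T H) K"
  shows "K \<lhd> G\<lparr>carrier := H\<rparr>"
proof -
  let ?GH = "G\<lparr>carrier := H\<rparr>" and ?TH = "subtopology T H" and ?M = "isolator G T K"
  have Hs: "subgroup H G" "closedin T H" using H(1) unfolding closed_subgroup_def by auto
  have KH: "orbital ?GH ?TH K" "\<And>H'. orbital ?GH ?TH H' \<Longrightarrow> K \<subset> H' \<Longrightarrow> \<not> fin_index ?GH H' K"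
    using K unfolding isolated_orbital_def by auto
  have KsubH: "K \<subseteq> H" using KH(1) subgroup.subset unfolding orbital_iff by fastforce
  have orbK: "orbital G T K"
    using orbital_if_orbital_in_open_subgroup[OF Hs
        openin_closed_subgroup_of_fin_index[OF tg Hs H(2)] KH(1)] .
  note M = isolator_greatest[OF cpt mc orbK]
  have nM: "?M \<lhd> G"
    using os isolated_orbital_isolator[OF cpt mc orbK] unfolding orbitally_sound_def by blast
  have "orbital ?GH ?TH (?M \<inter> H)"
    using orbital_Int_normal[OF nM _ Hs(1)] M(1) unfolding orbital_iff by blast
  moreover have "K \<subseteq> ?M \<inter> H" using M(2) KsubH by blast
  moreover have "fin_index ?GH (?M \<inter> H) K"
    using M(3) unfolding fin_index_def by (auto elim: finite_subset[rotated])
  ultimately have "K = ?M \<inter> H" using KH(2) by blast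
  then show ?thesis using normal_Int_subgroup[OF Hs(1) nM] by simp
qed

end

end

theorem lemma1p11:
  fixes G :: "('a, 'b) monoid_scheme" and T :: "'a topology"
  assumes "profinite_group G T" and "max_cond_closed G T"
  shows "(\<forall>H. orbital G T H \<longrightarrow>
            isolated_orbital G T (isolator G T H) \<and>
            (H \<lhd> G \<longrightarrow> isolator G T H \<lhd> G))
       \<and> (orbitally_sound G T \<longrightarrow>
            (\<forall>H. closed_subgroup G T H \<and> fin_index G (carrier G) H \<longrightarrow>
                 orbitally_sound (G\<lparr>carrier := H\<rparr>) (subtopology T H)))"
proof -
  have tg: "topological_group G T" and cpt: "compact_space T"
    using assms(1) unfolding profinite_group_def by auto
  then interpret group G unfolding topological_group_def by blast
  show ?thesis
    using isolated_orbital_isolator[OF tg cpt assms(2)] normal_isolator[OF tg cpt assms(2)]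
      normal_if_isolated_orbital_in_fin_index_subgroup[OF tg cpt assms(2)]
    unfolding orbitally_sound_def by blast
qed

end
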